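(* Let $(p_n)$ be a scale and let $\mathbb{Z}_{(p_n)}$ be the odometer with scale $(p_n)$. Then the stabilized automorphism group $\operatorname{Aut}^{(\infty)}(\mathbb{Z}_{(p_n)},+\mathbf{1})$ is isomorphic (as a group) to the direct limit of a sequence of group monomorphisms $G_0\to G_1\to G_2\to\cdots$ in which each group $G_j$ is of the form $\left(\mathbb{Z}_{(q_n)}\right)^{p_k}\rtimes \operatorname{Sym}(p_k)$, where $\mathbb{Z}_{(q_n)}$ is an odometer that is a factor of $\mathbb{Z}_{(p_n)}$ and $p_k$ is a term of the scale $(p_n)$.
   Context: A scale is a sequence $(p_n)_{n\ge1}$ of positive integers with $p_n\mid p_{n+1}$ for all $n$; scales are assumed not eventually constant. The odometer with scale $(p_n)$ is the compact group $\mathbb{Z}_{(p_n)}=\{(x_n)\in\prod_{n\ge1}\mathbb{Z}/p_n\mathbb{Z} : x_{n+1}\equiv x_n \bmod p_n \text{ for all } n\}$ (product topology), with $\mathbf{1}=(1,1,1,\dots)$; the dynamical system $(\mathbb{Z}_{(p_n)},+\mathbf{1})$ is translation by $\mathbf{1}$. For a compact metric space $X$ and a homeomorphism $T$, $\operatorname{Aut}(X,T)$ is the group of homeomorphisms of $X$ commuting with $T$, and the stabilized automorphism group is $\operatorname{Aut}^{(\infty)}(X,T)=\bigcup_{n\ge1}\operatorname{Aut}(X,T^n)\subseteq\operatorname{Homeo}(X)$. A factor of $(\mathbb{Z}_{(p_n)},+\mathbf{1})$ is a system $(\mathbb{Z}_{(q_n)},+\mathbf{1})$ admitting a continuous surjection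 from $\mathbb{Z}_{(p_n)}$ intertwining the translations. $\operatorname{Sym}(n)$ is the symmetric group on $n$ symbols, and in $H^{n}\rtimes\operatorname{Sym}(n)$ the symmetric group acts by permuting coordinates. *)

theory Defs
  imports "HOL-Analysis.Analysis" "HOL-Algebra.Group" "HOL-Combinatorics.Permutations"
begin

(* Scales are indexed from 0: p 0, p 1, ... corresponds to p_1, p_2, ... of the paper. *)
definition scale :: "(nat \<Rightarrow> nat) \<Rightarrow> bool" where
  "scale p \<longleftrightarrow> (\<forall>n. 0 < p n \<and> p n dvd p (Suc n)) \<and> \<not> (\<exists>N. \<forall>n\<ge>N. p n = p N)"

(* The odometer: compatible sequences x n \<in> Z/(p n)Z, residues represented in {0..<p n}. *)
definition odometer :: "(nat \<Rightarrow> nat) \<Rightarrow> (nat \<Rightarrow> nat) set" where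
  "odometer p = {x. (\<forall>n. x n < p n) \<and> (\<forall>n. x (Suc n) mod p n = x n)}"

definition odo_top :: "(nat \<Rightarrow> nat) \<Rightarrow> (nat \<Rightarrow> nat) topology" where
  "odo_top p = subtopology (product_topology (\<lambda>_. discrete_topology UNIV) UNIV) (odometer p)"

definition odo_add :: "(nat \<Rightarrow> nat) \<Rightarrow> (nat \<Rightarrow> nat) \<Rightarrow> (nat \<Rightarrow> nat) \<Rightarrow> (nat \<Rightarrow> nat)" where
  "odo_add p x y = (\<lambda>n. (x n + y n) mod p n)"

definition odo_one :: "(nat \<Rightarrow> nat) \<Rightarrow> (nat \<Rightarrow> nat)" where
  "odo_one p = (\<lambda>n. 1 mod p n)"

definition add1 :: "(nat \<Rightarrow> nat) \<Rightarrow> (nat \<Rightarrow> nat) \<Rightarrow> (nat \<Rightarrow> nat)" where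
  "add1 p x = odo_add p x (odo_one p)"

definition odo_factor :: "(nat \<Rightarrow> nat) \<Rightarrow> (nat \<Rightarrow> nat) \<Rightarrow> bool" where
  "odo_factor q p \<longleftrightarrow> scale q \<and> (\<exists>\<pi>. continuous_map (odo_top p) (odo_top q) \<pi>
      \<and> \<pi> ` odometer p = odometer q
      \<and> (\<forall>x\<in>odometer p. \<pi> (add1 p x) = add1 q (\<pi> x)))"

definition aut_pow :: "(nat \<Rightarrow> nat) \<Rightarrow> nat \<Rightarrow> ((nat \<Rightarrow> nat) \<Rightarrow> (nat \<Rightarrow> nat)) set" where
  "aut_pow p n = {f. f \<in> extensional (odometer p) \<and> homeomorphic_map (odo_top p) (odo_top p) f
       \<and> (\<forall>x\<in>odometer p. f ((add1 p ^^ n) x) = (add1 p ^^ n) (f x))}"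

definition stab_aut :: "(nat \<Rightarrow> nat) \<Rightarrow> ((nat \<Rightarrow> nat) \<Rightarrow> (nat \<Rightarrow> nat)) monoid" where
  "stab_aut p = \<lparr> carrier = (\<Union>n\<in>{1..}. aut_pow p n),
                   mult = (\<lambda>f g. compose (odometer p) f g),
                   one = restrict id (odometer p) \<rparr>"

(* (Z_(q))^m \<rtimes> Sym(m): elements (v, \<sigma>) with v : {0..<m} \<rightarrow> Z_(q) and \<sigma> a permutation
   of {0..<m}; Sym(m) acts on coordinates by (\<sigma>.w) i = w (\<sigma>^-1 i). *)
definition odo_sdp :: "(nat \<Rightarrow> nat) \<Rightarrow> nat \<Rightarrow> ((nat \<Rightarrow> nat \<Rightarrow> nat) \<times> (nat \<Rightarrow> nat)) monoid" where
  "odo_sdp q m = \<lparr> carrier = {(v, \<sigma>). v \<in> {0..<m} \<rightarrow>\<^sub>E odometer q \<and> \<sigma> permutes {0..<m}},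
       mult = (\<lambda>(v, \<sigma>) (w, \<tau>). (restrict (\<lambda>i. odo_add q (v i) (w (inv_into UNIV \<sigma> i))) {0..<m}, \<sigma> \<circ> \<tau>)),
       one = (restrict (\<lambda>i. (\<lambda>n. 0)) {0..<m}, id) \<rparr>"

fun dl_lift :: "(nat \<Rightarrow> 'a \<Rightarrow> 'a) \<Rightarrow> nat \<Rightarrow> nat \<Rightarrow> 'a \<Rightarrow> 'a" where
  "dl_lift \<phi> i 0 = id"
| "dl_lift \<phi> i (Suc d) = \<phi> (i + d) \<circ> dl_lift \<phi> i d"

definition dl_rel :: "(nat \<Rightarrow> 'a monoid) \<Rightarrow> (nat \<Rightarrow> 'a \<Rightarrow> 'a) \<Rightarrow> ((nat \<times> 'a) \<times> (nat \<times> 'a)) set" where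
  "dl_rel G \<phi> = {((i, g), (j, h)). g \<in> carrier (G i) \<and> h \<in> carrier (G j) \<and>
      (\<exists>k. i \<le> k \<and> j \<le> k \<and> dl_lift \<phi> i (k - i) g = dl_lift \<phi> j (k - j) h)}"

definition dl_mult :: "(nat \<Rightarrow> 'a monoid) \<Rightarrow> (nat \<Rightarrow> 'a \<Rightarrow> 'a) \<Rightarrow> (nat \<times> 'a) set \<Rightarrow> (nat \<times> 'a) set \<Rightarrow> (nat \<times> 'a) set" where
  "dl_mult G \<phi> A B =
     (let (i, g) = (SOME a. a \<in> A); (j, h) = (SOME b. b \<in> B); k = max i j in
      dl_rel G \<phi> `` {(k, dl_lift \<phi> i (k - i) g \<otimes>\<^bsub>G k\<^esub> dl_lift \<phi> j (k - j) h)})"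

definition direct_limit :: "(nat \<Rightarrow> 'a monoid) \<Rightarrow> (nat \<Rightarrow> 'a \<Rightarrow> 'a) \<Rightarrow> ((nat \<times> 'a) set) monoid" where
  "direct_limit G \<phi> = \<lparr> carrier = (SIGMA j:UNIV. carrier (G j)) // dl_rel G \<phi>,
                        mult = dl_mult G \<phi>,
                        one = dl_rel G \<phi> `` {(0, \<one>\<^bsub>G 0\<^esub>)} \<rparr>"

end

theory Submission
  imports Defs "HOL-Number_Theory.Cong"
begin

(*
  Fix K and write q n = p (n + K) div p K. The map x \<mapsto> (x K, z) with z n = x (n + K) div p K
  identifies Z_(p) with {0..<p K} \<times> Z_(q), and T^(p K) becomes (r, z) \<mapsto> (r, z + 1). Hence
  (Z_(q))^(p K) \<rtimes> Sym(p K) acts faithfully on Z_(p) by (v, \<sigma>): (r, z) \<mapsto> (\<sigma> r, z + v (\<sigma> r)),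
  through homeomorphisms commuting with T^(p K).

  Conversely let f be a homeomorphism commuting with T^n, and choose K so large that
  gcd n (p j) divides p K for all j \<ge> K. Then the closure of the T^n-orbit of x contains every y
  with y K = x K, so continuity forces f y - y = f x - x for all such y; such an f is given by an
  element of the semidirect product at level K. The stabilized automorphism group is therefore the
  increasing union of the images of these injective actions, i.e. their direct limit along the
  embeddings of level K into level K + 1.
*)

section \<open>Odometer arithmetic\<close>

definition odo_neg :: "(nat \<Rightarrow> nat) \<Rightarrow> (nat \<Rightarrow> nat) \<Rightarrow> (nat \<Rightarrow> nat)" where
  "odo_neg p x = (\<lambda>n. (p n - x n) mod p n)"

locale odometer_chain =
  fixes p :: "nat \<Rightarrow> nat"
  assumes pos: "0 < p n"
    and dvd_Suc: "p n dvd p (Suc n)"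
begin

abbreviation X where "X \<equiv> odometer p"

lemma p_dvd_p: "m \<le> n \<Longrightarrow> p m dvd p n"
  by (induction rule: dec_induct) (auto intro: dvd_trans dvd_Suc)

lemma mod_p_mod: "m \<le> n \<Longrightarrow> a mod p n mod p m = a mod p m"
  by (simp add: mod_mod_cancel p_dvd_p)

lemma odometer_lt: "x \<in> X \<Longrightarrow> x j < p j"
  unfolding odometer_def by blast

lemma odometer_mod:
  assumes x: "x \<in> X" and "i \<le> N"
  shows "x N mod p i = x i"
  using \<open>i \<le> N\<close>
proof (induction rule: dec_induct)
  case base
  show ?case using odometer_lt[OF x] by simp
next
  case (step n)
  have "x (Suc n) mod p i = x (Suc n) mod p n mod p i"
    using mod_p_mod[OF step(1)] by simp
  then show ?case using x step.IH unfolding odometer_def by simp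
qed

lemma odometer_eq_below:
  assumes "x \<in> X" "y \<in> X" "x N = y N" "i \<le> N"
  shows "x i = y i"
  using odometer_mod[OF assms(1,4)] odometer_mod[OF assms(2,4)] assms(3) by simp

lemma mod_seq_in_odometer:
  assumes "\<And>n. [a (Suc n) = a n] (mod p n)"
  shows "(\<lambda>j. a j mod p j) \<in> X"
  unfolding odometer_def using assms pos mod_p_mod[of n "Suc n" for n]
  by (simp add: cong_def)

lemma odometer_cong_Suc: "x \<in> X \<Longrightarrow> [x (Suc n) = x n] (mod p n)"
  using odometer_lt[of x n] unfolding odometer_def cong_def by simp

lemma odo_add_closed: "x \<in> X \<Longrightarrow> y \<in> X \<Longrightarrow> odo_add p x y \<in> X"
  unfolding odo_add_def by (intro mod_seq_in_odometer cong_add odometer_cong_Suc)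

lemma zero_in_odometer: "(\<lambda>n. 0) \<in> X"
  unfolding odometer_def using pos by simp

lemma odo_add_commute: "odo_add p x y = odo_add p y x"
  unfolding odo_add_def by (simp add: add.commute)

lemma odo_add_assoc: "odo_add p (odo_add p x y) z = odo_add p x (odo_add p y z)"
  unfolding odo_add_def by (simp add: mod_simps add.assoc)

lemma odo_add_zero: "x \<in> X \<Longrightarrow> odo_add p x (\<lambda>n. 0) = x"
  unfolding odo_add_def using odometer_lt by auto

lemma odo_zero_add: "x \<in> X \<Longrightarrow> odo_add p (\<lambda>n. 0) x = x"
  using odo_add_zero odo_add_commute by metis

lemma odo_neg_closed:
  assumes x: "x \<in> X"
  shows "odo_neg p x \<in> X"
  unfolding odo_neg_def
proof (rule mod_seq_in_odometer)
  fix n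
  have lt: "x (Suc n) < p (Suc n)" "x n < p n" using odometer_lt[OF x] by auto
  have "[p (Suc n) - x (Suc n) + x (Suc n) = 0] (mod p n)"
    using lt(1) dvd_Suc by (simp add: cong_0_iff)
  moreover have "[x (Suc n) = x n] (mod p n)" by (rule odometer_cong_Suc[OF x])
  ultimately have "[p (Suc n) - x (Suc n) + x n = 0] (mod p n)"
    by (metis cong_add_lcancel_nat cong_sym cong_trans cong_add cong_refl)
  moreover have "[p n - x n + x n = 0] (mod p n)" using lt(2) by (simp add: cong_0_iff)
  ultimately show "[p (Suc n) - x (Suc n) = p n - x n] (mod p n)"
    by (metis cong_add_rcancel_nat cong_sym cong_trans)
qed

lemma odo_add_neg: "x \<in> X \<Longrightarrow> odo_add p x (odo_neg p x) = (\<lambda>n. 0)"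
  unfolding odo_add_def odo_neg_def
  by (rule ext) (simp add: mod_add_right_eq odometer_lt less_imp_le)

lemma odo_neg_add: "x \<in> X \<Longrightarrow> odo_add p (odo_neg p x) x = (\<lambda>n. 0)"
  using odo_add_neg odo_add_commute by metis

lemma add1_funpow: "x \<in> X \<Longrightarrow> (add1 p ^^ n) x = (\<lambda>j. (x j + n) mod p j)"
proof (induction n)
  case 0
  then show ?case using odometer_lt by auto
next
  case (Suc n)
  then show ?case
    unfolding add1_def odo_add_def odo_one_def by (simp only: funpow.simps o_apply mod_add_eq) simp
qed

lemma add1_funpow_closed: "x \<in> X \<Longrightarrow> (add1 p ^^ n) x \<in> X"
  unfolding add1_funpow by (intro mod_seq_in_odometer cong_add odometer_cong_Suc cong_refl)

end

lemma odometer_chain_if_scale: "scale p \<Longrightarrow> odometer_chain p"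
  unfolding scale_def odometer_chain_def by blast

section \<open>Splitting off the coordinate K\<close>

definition quot_scale :: "(nat \<Rightarrow> nat) \<Rightarrow> nat \<Rightarrow> nat \<Rightarrow> nat" where
  "quot_scale p K = (\<lambda>n. p (n + K) div p K)"

definition odo_high :: "(nat \<Rightarrow> nat) \<Rightarrow> nat \<Rightarrow> (nat \<Rightarrow> nat) \<Rightarrow> (nat \<Rightarrow> nat)" where
  "odo_high p K x = (\<lambda>n. x (n + K) div p K)"

definition odo_join :: "(nat \<Rightarrow> nat) \<Rightarrow> nat \<Rightarrow> nat \<Rightarrow> (nat \<Rightarrow> nat) \<Rightarrow> (nat \<Rightarrow> nat)" where
  "odo_join p K r z = (\<lambda>j. (r + p K * z j) mod p j)"

context odometer_chain
begin

lemma p_mult_quot_scale: "p K * quot_scale p K n = p (n + K)"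
  unfolding quot_scale_def using p_dvd_p[of K "n + K"] by simp

lemma odometer_chain_quot_scale: "odometer_chain (quot_scale p K)"
proof
  fix n
  show "0 < quot_scale p K n"
    using p_mult_quot_scale[of K n] pos[of "n + K"] by (metis gr0I mult_0_right)
  have "p K * quot_scale p K n dvd p K * quot_scale p K (Suc n)"
    unfolding p_mult_quot_scale using dvd_Suc[of "n + K"] by simp
  then show "quot_scale p K n dvd quot_scale p K (Suc n)"
    using pos[of K] by simp
qed

lemma mult_mod_quot_scale: "p K * (a mod quot_scale p K j) mod p j = p K * a mod p j"
proof -
  have "p K * (a mod quot_scale p K j) = p K * a mod p (j + K)"
    by (simp add: mult_mod_right p_mult_quot_scale)
  then show ?thesis using mod_p_mod[of j "j + K"] by simp
qed

lemma odo_join_add: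
  "odo_join p K r (odo_add (quot_scale p K) z w) j = (r + p K * (z j + w j)) mod p j"
  unfolding odo_join_def odo_add_def by (metis mod_add_right_eq mult_mod_quot_scale)

lemma odo_join_closed:
  assumes z: "z \<in> odometer (quot_scale p K)"
  shows "odo_join p K r z \<in> X"
  unfolding odo_join_def
proof (rule mod_seq_in_odometer)
  fix j
  interpret Q: odometer_chain "quot_scale p K" by (rule odometer_chain_quot_scale)
  have "p K * z (Suc j) mod p j = p K * z j mod p j"
    using mult_mod_quot_scale[of K "z (Suc j)" j] Q.odometer_mod[OF z, of j "Suc j"] by simp
  then show "[r + p K * z (Suc j) = r + p K * z j] (mod p j)"
    unfolding cong_def by (metis mod_add_right_eq)
qed

lemma odo_join_at: "r < p K \<Longrightarrow> odo_join p K r z K = r"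
  unfolding odo_join_def by simp

lemma odo_high_closed:
  assumes x: "x \<in> X"
  shows "odo_high p K x \<in> odometer (quot_scale p K)"
  unfolding odometer_def odo_high_def
proof (intro CollectI conjI allI)
  fix j
  have "x (j + K) < p K * quot_scale p K j" using odometer_lt[OF x] p_mult_quot_scale by simp
  then show "x (j + K) div p K < quot_scale p K j"
    by (simp add: less_mult_imp_div_less mult.commute)
  let ?a = "x (Suc j + K)"
  have "?a mod (p K * quot_scale p K j) = p K * (?a div p K mod quot_scale p K j) + ?a mod p K"
    by (rule mod_mult2_eq)
  then have "?a div p K mod quot_scale p K j = ?a mod (p K * quot_scale p K j) div p K"
    using pos[of K] by simp
  also have "\<dots> = x (j + K) div p K"
    using odometer_mod[OF x, of "j + K" "Suc j + K"] by (simp add: p_mult_quot_scale)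
  finally show "x (Suc j + K) div p K mod quot_scale p K j = x (j + K) div p K" .
qed

lemma odo_join_high:
  assumes x: "x \<in> X"
  shows "odo_join p K (x K) (odo_high p K x) = x"
proof
  fix j
  have "x K + p K * (x (j + K) div p K) = x (j + K)"
    using odometer_mod[OF x, of K "j + K"] by (metis add.commute le_add2 mod_mult_div_eq)
  then show "odo_join p K (x K) (odo_high p K x) j = x j"
    unfolding odo_join_def odo_high_def using odometer_mod[OF x, of j "j + K"] by simp
qed

lemma odo_high_join:
  assumes r: "r < p K" and z: "z \<in> odometer (quot_scale p K)"
  shows "odo_high p K (odo_join p K r z) = z"
proof
  fix j
  interpret Q: odometer_chain "quot_scale p K" by (rule odometer_chain_quot_scale)
  let ?a = "r + p K * z (j + K)"
  have "?a mod (p K * quot_scale p K j) = p K * (?a div p K mod quot_scale p K j) + ?a mod p K"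
    by (rule mod_mult2_eq)
  then have "?a mod p (j + K) div p K = z (j + K) mod quot_scale p K j"
    using r by (simp add: p_mult_quot_scale)
  then show "odo_high p K (odo_join p K r z) j = z j"
    unfolding odo_high_def odo_join_def using Q.odometer_mod[OF z, of j "j + K"] by simp
qed

lemma odometer_coord: "x \<in> X \<Longrightarrow> x j = (x K + p K * odo_high p K x j) mod p j"
  using odo_join_high unfolding odo_join_def by metis

end

section \<open>Continuity on the odometer\<close>

lemma topspace_odo_top [simp]: "topspace (odo_top p) = odometer p"
  unfolding odo_top_def by simp

lemma openin_odo_top_cylinder: "openin (odo_top p) {y \<in> odometer p. y N = c}"
proof -
  have "openin (product_topology (\<lambda>_. discrete_topology (UNIV::nat set)) UNIV)
      {y \<in> topspace (product_topology (\<lambda>_. discrete_topology (UNIV::nat set)) UNIV). y N \<in> {c}}"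
    by (rule openin_continuous_map_preimage[OF continuous_map_product_projection]) auto
  then show ?thesis unfolding odo_top_def openin_subtopology by auto
qed

lemma continuous_map_odo_top_discreteI:
  assumes "\<And>x. x \<in> odometer p \<Longrightarrow> \<exists>N. \<forall>y\<in>odometer p. y N = x N \<longrightarrow> g y = g x"
  shows "continuous_map (odo_top p) (discrete_topology UNIV) g"
proof -
  have "openin (odo_top p) {x \<in> topspace (odo_top p). g x \<in> U}" for U
  proof (rule openin_subopen[THEN iffD2], rule ballI)
    fix x assume "x \<in> {x \<in> topspace (odo_top p). g x \<in> U}"
    then have x: "x \<in> odometer p" "g x \<in> U" by auto
    obtain N where "\<forall>y\<in>odometer p. y N = x N \<longrightarrow> g y = g x" using assms[OF x(1)] by blast
    then have "{y \<in> odometer p. y N = x N} \<subseteq> {x \<in> topspace (odo_top p). g x \<in> U}"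
      using x(2) by auto
    then show "\<exists>T. openin (odo_top p) T \<and> x \<in> T \<and> T \<subseteq> {x \<in> topspace (odo_top p). g x \<in> U}"
      using openin_odo_top_cylinder[of p N "x N"] x(1) by auto
  qed
  then show ?thesis unfolding continuous_map_def by simp
qed

lemma continuous_map_odo_topI:
  assumes "\<And>x. x \<in> odometer p \<Longrightarrow> h x \<in> odometer q"
    and "\<And>j. \<exists>N. \<forall>x\<in>odometer p. \<forall>y\<in>odometer p. x N = y N \<longrightarrow> h x j = h y j"
  shows "continuous_map (odo_top p) (odo_top q) h"
proof -
  have "continuous_map (odo_top p) (product_topology (\<lambda>_. discrete_topology (UNIV::nat set)) UNIV) h"
    unfolding continuous_map_componentwise_UNIV
  proof
    fix j
    obtain N where N: "\<forall>x\<in>odometer p. \<forall>y\<in>odometer p. x N = y N \<longrightarrow> h x j = h y j"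
      using assms(2) by blast
    show "continuous_map (odo_top p) (discrete_topology UNIV) (\<lambda>x. h x j)"
      by (rule continuous_map_odo_top_discreteI) (use N in blast)
  qed
  moreover have "h \<in> topspace (odo_top p) \<rightarrow> odometer q" using assms(1) by simp
  ultimately show ?thesis unfolding odo_top_def[of q] continuous_map_in_subtopology by blast
qed

context odometer_chain
begin

lemma continuous_map_odo_top_locally_constant:
  assumes f: "continuous_map (odo_top p) (odo_top q) f" and x: "x \<in> X"
  shows "\<exists>N. \<forall>y\<in>X. y N = x N \<longrightarrow> f y j = f x j"
proof -
  have fx: "f x \<in> odometer q" using f x unfolding continuous_map_def by auto
  have "openin (odo_top p) {y \<in> topspace (odo_top p). f y \<in> {z \<in> odometer q. z j = f x j}}"
    by (rule openin_continuous_map_preimage[OF f openin_odo_top_cylinder])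
  then obtain T where T: "openin (product_topology (\<lambda>_. discrete_topology (UNIV::nat set)) UNIV) T"
      "{y \<in> X. f y \<in> {z \<in> odometer q. z j = f x j}} = T \<inter> X"
    unfolding odo_top_def openin_subtopology by auto
  have "x \<in> T" using T(2) x fx by blast
  then obtain U where U: "finite {i \<in> UNIV. U i \<noteq> topspace (discrete_topology (UNIV::nat set))}"
      "x \<in> PiE UNIV U" "PiE UNIV U \<subseteq> T"
    using T(1) unfolding openin_product_topology_alt by blast
  define F where "F = {i \<in> UNIV. U i \<noteq> topspace (discrete_topology (UNIV::nat set))}"
  define N where "N = Max (insert 0 F)"
  show ?thesis
  proof (intro exI ballI impI)
    fix y assume y: "y \<in> X" "y N = x N"
    have "y i \<in> U i" for i
    proof (cases "i \<in> F")
      case True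
      then have "i \<le> N" unfolding N_def using U(1) F_def by simp
      then show ?thesis using odometer_eq_below[OF y(1) x y(2)] U(2) by (simp add: PiE_iff)
    qed (simp add: F_def)
    then have "y \<in> T" using U(3) by auto
    then show "f y j = f x j" using T(2) y(1) by blast
  qed
qed

end

section \<open>The semidirect products and their actions\<close>

lemma permutes_lt:
  fixes m :: nat
  assumes "\<sigma> permutes {0..<m}" "r < m"
  shows "\<sigma> r < m"
  using permutes_in_image[OF assms(1), of r] assms(2) by simp

lemma carrier_odo_sdp:
  "a \<in> carrier (odo_sdp q m) \<longleftrightarrow> fst a \<in> {0..<m} \<rightarrow>\<^sub>E odometer q \<and> snd a permutes {0..<m}"
  by (cases a) (simp add: odo_sdp_def)

lemma odo_sdp_mult:
  "(v, \<sigma>) \<otimes>\<^bsub>odo_sdp q m\<^esub> (w, \<tau>) =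
     ((\<lambda>i\<in>{0..<m}. odo_add q (v i) (w (inv_into UNIV \<sigma> i))), \<sigma> \<circ> \<tau>)"
  by (simp add: odo_sdp_def)

definition sdp_act ::
    "(nat \<Rightarrow> nat) \<Rightarrow> nat \<Rightarrow> (nat \<Rightarrow> nat \<Rightarrow> nat) \<times> (nat \<Rightarrow> nat) \<Rightarrow> (nat \<Rightarrow> nat) \<Rightarrow> (nat \<Rightarrow> nat)" where
  "sdp_act p K a = (\<lambda>x\<in>odometer p.
     odo_join p K (snd a (x K)) (odo_add (quot_scale p K) (odo_high p K x) (fst a (snd a (x K)))))"

(* f y - y = f x - x in every Z/(p j) whenever x K = y K, stated without subtraction. *)
definition displacement_local :: "(nat \<Rightarrow> nat) \<Rightarrow> nat \<Rightarrow> ((nat \<Rightarrow> nat) \<Rightarrow> (nat \<Rightarrow> nat)) \<Rightarrow> bool" where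
  "displacement_local p K f \<longleftrightarrow> (\<forall>x\<in>odometer p. \<forall>y\<in>odometer p. x K = y K \<longrightarrow>
      (\<forall>j. (f y j + x j) mod p j = (f x j + y j) mod p j))"

context odometer_chain
begin

lemma odo_sdp_mult_closed:
  assumes "a \<in> carrier (odo_sdp p m)" "b \<in> carrier (odo_sdp p m)"
  shows "a \<otimes>\<^bsub>odo_sdp p m\<^esub> b \<in> carrier (odo_sdp p m)"
proof -
  obtain v \<sigma> w \<tau> where ab: "a = (v, \<sigma>)" "b = (w, \<tau>)" by (cases a, cases b)
  have v: "v \<in> {0..<m} \<rightarrow>\<^sub>E X" and \<sigma>: "\<sigma> permutes {0..<m}"
    and w: "w \<in> {0..<m} \<rightarrow>\<^sub>E X" and \<tau>: "\<tau> permutes {0..<m}"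
    using assms ab unfolding carrier_odo_sdp by auto
  have "w (inv_into UNIV \<sigma> i) \<in> X" if "i < m" for i
    using w permutes_lt[OF permutes_inv[OF \<sigma>] that] by auto
  then have "(\<lambda>i\<in>{0..<m}. odo_add p (v i) (w (inv_into UNIV \<sigma> i))) \<in> {0..<m} \<rightarrow>\<^sub>E X"
    using v by (auto intro: odo_add_closed)
  then show ?thesis
    unfolding ab odo_sdp_mult carrier_odo_sdp using permutes_compose[OF \<tau> \<sigma>] by simp
qed

lemma odo_sdp_inverse:
  assumes a: "a \<in> carrier (odo_sdp p m)"
  obtains a' where "a' \<in> carrier (odo_sdp p m)"
    "a \<otimes>\<^bsub>odo_sdp p m\<^esub> a' = \<one>\<^bsub>odo_sdp p m\<^esub>" "a' \<otimes>\<^bsub>odo_sdp p m\<^esub> a = \<one>\<^bsub>odo_sdp p m\<^esub>"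
proof -
  obtain v \<sigma> where av: "a = (v, \<sigma>)" by (cases a)
  have v: "\<And>i. i < m \<Longrightarrow> v i \<in> X" and \<sigma>: "\<sigma> permutes {0..<m}"
    using a av unfolding carrier_odo_sdp by auto
  define a' where "a' = ((\<lambda>i\<in>{0..<m}. odo_neg p (v (\<sigma> i))), inv_into UNIV \<sigma>)"
  have "a' \<in> carrier (odo_sdp p m)"
    unfolding a'_def carrier_odo_sdp
    using v permutes_lt[OF \<sigma>] odo_neg_closed permutes_inv[OF \<sigma>] by auto
  moreover have "a \<otimes>\<^bsub>odo_sdp p m\<^esub> a' = \<one>\<^bsub>odo_sdp p m\<^esub>"
    unfolding av a'_def odo_sdp_mult
    using permutes_lt[OF permutes_inv[OF \<sigma>]] permutes_inverses[OF \<sigma>] permutes_inv_o[OF \<sigma>]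
    by (auto simp: odo_sdp_def odo_add_neg v intro!: restrict_ext)
  moreover have "a' \<otimes>\<^bsub>odo_sdp p m\<^esub> a = \<one>\<^bsub>odo_sdp p m\<^esub>"
    unfolding av a'_def odo_sdp_mult permutes_inv_inv[OF \<sigma>]
    using permutes_lt[OF \<sigma>] permutes_inv_o[OF \<sigma>]
    by (auto simp: odo_sdp_def odo_neg_add v intro!: restrict_ext)
  ultimately show thesis using that by blast
qed

abbreviation G where "G K \<equiv> odo_sdp (quot_scale p K) (p K)"

lemma sdp_act_split:
  assumes a: "a \<in> carrier (G K)" and x: "x \<in> X"
  shows "sdp_act p K a x \<in> X" "sdp_act p K a x K = snd a (x K)"
    "odo_high p K (sdp_act p K a x) = odo_add (quot_scale p K) (odo_high p K x) (fst a (snd a (x K)))"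
proof -
  interpret Q: odometer_chain "quot_scale p K" by (rule odometer_chain_quot_scale)
  have r: "snd a (x K) < p K" using a odometer_lt[OF x] permutes_lt unfolding carrier_odo_sdp by blast
  have "fst a (snd a (x K)) \<in> odometer (quot_scale p K)" using a r unfolding carrier_odo_sdp by auto
  then have z: "odo_add (quot_scale p K) (odo_high p K x) (fst a (snd a (x K))) \<in> odometer (quot_scale p K)"
    by (rule Q.odo_add_closed[OF odo_high_closed[OF x]])
  show "sdp_act p K a x \<in> X" using x odo_join_closed[OF z] unfolding sdp_act_def by simp
  show "sdp_act p K a x K = snd a (x K)" using x odo_join_at[OF r] unfolding sdp_act_def by simp
  show "odo_high p K (sdp_act p K a x) = odo_add (quot_scale p K) (odo_high p K x) (fst a (snd a (x K)))"
    using x odo_high_join[OF r z] unfolding sdp_act_def by simp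
qed

lemma sdp_act_mult:
  assumes a: "a \<in> carrier (G K)" and b: "b \<in> carrier (G K)"
  shows "sdp_act p K (a \<otimes>\<^bsub>G K\<^esub> b) = compose X (sdp_act p K a) (sdp_act p K b)"
proof
  interpret Q: odometer_chain "quot_scale p K" by (rule odometer_chain_quot_scale)
  obtain v \<sigma> w \<tau> where ab: "a = (v, \<sigma>)" "b = (w, \<tau>)" by (cases a, cases b)
  have \<sigma>: "\<sigma> permutes {0..<p K}" and \<tau>: "\<tau> permutes {0..<p K}"
    using a b ab unfolding carrier_odo_sdp by auto
  fix x
  show "sdp_act p K (a \<otimes>\<^bsub>G K\<^esub> b) x = compose X (sdp_act p K a) (sdp_act p K b) x"
  proof (cases "x \<in> X")
    case x: True
    have "\<sigma> (\<tau> (x K)) < p K" using \<sigma> \<tau> odometer_lt[OF x] permutes_lt by blast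
    then have "sdp_act p K (a \<otimes>\<^bsub>G K\<^esub> b) x = odo_join p K (\<sigma> (\<tau> (x K)))
        (odo_add (quot_scale p K) (odo_high p K x) (odo_add (quot_scale p K) (v (\<sigma> (\<tau> (x K)))) (w (\<tau> (x K)))))"
      using x permutes_inverses(2)[OF \<sigma>] unfolding sdp_act_def ab odo_sdp_mult by simp
    also have "\<dots> = compose X (sdp_act p K a) (sdp_act p K b) x"
      using x sdp_act_split[OF b x] ab unfolding compose_def sdp_act_def
      by (simp add: Q.odo_add_assoc Q.odo_add_commute[of "w (\<tau> (x K))"])
    finally show ?thesis .
  qed (simp add: sdp_act_def compose_def)
qed

lemma sdp_act_one: "x \<in> X \<Longrightarrow> sdp_act p K \<one>\<^bsub>G K\<^esub> x = x"
  using odometer_lt[of x K] odometer_chain.odo_add_zero[OF odometer_chain_quot_scale odo_high_closed]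
    odo_join_high
  by (simp add: sdp_act_def odo_sdp_def)

lemma sdp_act_coord:
  assumes a: "a \<in> carrier (G K)" and x: "x \<in> X"
  shows "sdp_act p K a x j = (snd a (x K) + p K * (odo_high p K x j + fst a (snd a (x K)) j)) mod p j"
  using x unfolding sdp_act_def by (simp add: odo_join_add)

lemma displacement_local_sdp_act:
  assumes a: "a \<in> carrier (G K)"
  shows "displacement_local p K (sdp_act p K a)"
  unfolding displacement_local_def
proof (intro ballI impI allI)
  fix x y j assume x: "x \<in> X" and y: "y \<in> X" and xy: "x K = y K"
  let ?s = "snd a (x K)" and ?c = "fst a (snd a (x K)) j"
  have fx: "sdp_act p K a x j = (?s + p K * (odo_high p K x j + ?c)) mod p j"
    by (rule sdp_act_coord[OF a x])
  have fy: "sdp_act p K a y j = (?s + p K * (odo_high p K y j + ?c)) mod p j"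
    using sdp_act_coord[OF a y, of j] xy by simp
  have xj: "x j = (x K + p K * odo_high p K x j) mod p j" by (rule odometer_coord[OF x])
  have yj: "y j = (x K + p K * odo_high p K y j) mod p j" using odometer_coord[OF y, of j K] xy by simp
  have "(sdp_act p K a y j + x j) mod p j
      = ((?s + p K * (odo_high p K y j + ?c)) + (x K + p K * odo_high p K x j)) mod p j"
    unfolding fy xj by (simp add: mod_add_eq)
  also have "\<dots> = ((?s + p K * (odo_high p K x j + ?c)) + (x K + p K * odo_high p K y j)) mod p j"
    by (simp add: algebra_simps)
  also have "\<dots> = (sdp_act p K a x j + y j) mod p j"
    unfolding fx yj by (simp add: mod_add_eq)
  finally show "(sdp_act p K a y j + x j) mod p j = (sdp_act p K a x j + y j) mod p j" .
qed

lemma commute_funpow_if_displacement_local: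
  assumes f: "displacement_local p K f" and fX: "\<And>x. x \<in> X \<Longrightarrow> f x \<in> X" and x: "x \<in> X"
  shows "f ((add1 p ^^ p K) x) = (add1 p ^^ p K) (f x)"
proof -
  let ?y = "(add1 p ^^ p K) x"
  have y: "?y \<in> X" and yK: "?y K = x K"
    using add1_funpow_closed[OF x] add1_funpow[OF x] odometer_lt[OF x, of K] by auto
  have "f ?y j = (f x j + p K) mod p j" for j
  proof -
    have "(f ?y j + x j) mod p j = (f x j + ?y j) mod p j"
      using f x y yK unfolding displacement_local_def by metis
    also have "\<dots> = (f x j + p K + x j) mod p j"
      using add1_funpow[OF x] by (simp add: mod_simps add_ac)
    finally have "[f ?y j = f x j + p K] (mod p j)"
      unfolding cong_def[symmetric] by (simp add: cong_add_rcancel_nat)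
    then show ?thesis using odometer_lt[OF fX[OF y]] unfolding cong_def by simp
  qed
  then show ?thesis using add1_funpow[OF fX[OF x]] by auto
qed

lemma sdp_act_continuous:
  assumes a: "a \<in> carrier (G K)"
  shows "continuous_map (odo_top p) (odo_top p) (sdp_act p K a)"
proof (rule continuous_map_odo_topI)
  show "x \<in> X \<Longrightarrow> sdp_act p K a x \<in> X" for x using sdp_act_split[OF a] by blast
  fix j
  have "sdp_act p K a x j = sdp_act p K a y j"
    if x: "x \<in> X" and y: "y \<in> X" and e: "x (j + K) = y (j + K)" for x y
  proof -
    have "x K = y K" using odometer_eq_below[OF x y e] by simp
    moreover have "odo_high p K x j = odo_high p K y j" unfolding odo_high_def using e by simp
    ultimately show ?thesis using sdp_act_coord[OF a x, of j] sdp_act_coord[OF a y, of j] by simp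
  qed
  then show "\<exists>N. \<forall>x\<in>X. \<forall>y\<in>X. x N = y N \<longrightarrow> sdp_act p K a x j = sdp_act p K a y j" by blast
qed

lemma sdp_act_in_aut_pow:
  assumes a: "a \<in> carrier (G K)"
  shows "sdp_act p K a \<in> aut_pow p (p K)"
proof -
  interpret Q: odometer_chain "quot_scale p K" by (rule odometer_chain_quot_scale)
  obtain a' where a': "a' \<in> carrier (G K)" "a \<otimes>\<^bsub>G K\<^esub> a' = \<one>\<^bsub>G K\<^esub>" "a' \<otimes>\<^bsub>G K\<^esub> a = \<one>\<^bsub>G K\<^esub>"
    using Q.odo_sdp_inverse[OF a] by blast
  have "sdp_act p K a (sdp_act p K a' x) = x" "sdp_act p K a' (sdp_act p K a x) = x"
    if x: "x \<in> X" for x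
  proof -
    have "sdp_act p K a (sdp_act p K a' x) = sdp_act p K (a \<otimes>\<^bsub>G K\<^esub> a') x"
      using sdp_act_mult[OF a a'(1)] x by (simp add: compose_def)
    then show "sdp_act p K a (sdp_act p K a' x) = x" using a'(2) sdp_act_one[OF x] by simp
    have "sdp_act p K a' (sdp_act p K a x) = sdp_act p K (a' \<otimes>\<^bsub>G K\<^esub> a) x"
      using sdp_act_mult[OF a'(1) a] x by (simp add: compose_def)
    then show "sdp_act p K a' (sdp_act p K a x) = x" using a'(3) sdp_act_one[OF x] by simp
  qed
  then have "homeomorphic_maps (odo_top p) (odo_top p) (sdp_act p K a) (sdp_act p K a')"
    unfolding homeomorphic_maps_def using sdp_act_continuous[OF a] sdp_act_continuous[OF a'(1)] by auto
  moreover have "sdp_act p K a \<in> extensional X" unfolding sdp_act_def by simp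
  moreover have "\<forall>x\<in>X. sdp_act p K a ((add1 p ^^ p K) x) = (add1 p ^^ p K) (sdp_act p K a x)"
    using commute_funpow_if_displacement_local[OF displacement_local_sdp_act[OF a]] sdp_act_split(1)[OF a]
    by blast
  ultimately show ?thesis unfolding aut_pow_def using homeomorphic_map_maps by blast
qed

abbreviation base where "base K r \<equiv> odo_join p K r (\<lambda>n. 0)"

lemma base_split:
  assumes "r < p K"
  shows "base K r \<in> X" "base K r K = r" "odo_high p K (base K r) = (\<lambda>n. 0)"
  using odo_join_closed odo_join_at[OF assms] odo_high_join[OF assms]
    odometer_chain.zero_in_odometer[OF odometer_chain_quot_scale]
  by auto

lemma inj_on_sdp_act: "inj_on (sdp_act p K) (carrier (G K))"
proof (rule inj_onI)
  interpret Q: odometer_chain "quot_scale p K" by (rule odometer_chain_quot_scale)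
  fix a b assume a: "a \<in> carrier (G K)" and b: "b \<in> carrier (G K)"
    and e: "sdp_act p K a = sdp_act p K b"
  obtain v \<sigma> w \<tau> where ab: "a = (v, \<sigma>)" "b = (w, \<tau>)" by (cases a, cases b)
  have v: "v \<in> {0..<p K} \<rightarrow>\<^sub>E odometer (quot_scale p K)" and \<sigma>: "\<sigma> permutes {0..<p K}"
    and w: "w \<in> {0..<p K} \<rightarrow>\<^sub>E odometer (quot_scale p K)" and \<tau>: "\<tau> permutes {0..<p K}"
    using a b ab unfolding carrier_odo_sdp by auto
  have on_base: "\<sigma> r = \<tau> r \<and> v (\<sigma> r) = w (\<tau> r)" if r: "r < p K" for r
  proof -
    have "v (\<sigma> r) \<in> odometer (quot_scale p K)" "w (\<tau> r) \<in> odometer (quot_scale p K)"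
      using v w permutes_lt[OF \<sigma> r] permutes_lt[OF \<tau> r] by auto
    then show ?thesis
      using sdp_act_split(2,3)[OF a base_split(1)[OF r]] sdp_act_split(2,3)[OF b base_split(1)[OF r]]
        base_split(2,3)[OF r] e ab by (simp add: Q.odo_zero_add)
  qed
  have "\<sigma> = \<tau>"
  proof
    fix r show "\<sigma> r = \<tau> r"
      using on_base permutes_not_in[OF \<sigma>, of r] permutes_not_in[OF \<tau>, of r]
      by (cases "r < p K") auto
  qed
  moreover have "v = w"
  proof
    fix i show "v i = w i"
    proof (cases "i < p K")
      case True
      then show ?thesis
        using on_base[OF permutes_lt[OF permutes_inv[OF \<sigma>] True]] permutes_inverses(1)[OF \<sigma>] \<open>\<sigma> = \<tau>\<close>
        by simp
    qed (use PiE_arb[OF v] PiE_arb[OF w] in simp)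
  qed
  ultimately show "a = b" using ab by simp
qed

section \<open>Automorphisms of powers are given by the semidirect products\<close>

lemma funpow_add1_commute_mult:
  assumes fX: "\<And>x. x \<in> X \<Longrightarrow> f x \<in> X"
    and comm: "\<And>x. x \<in> X \<Longrightarrow> f ((add1 p ^^ n) x) = (add1 p ^^ n) (f x)"
    and x: "x \<in> X"
  shows "f ((add1 p ^^ (n * t)) x) = (add1 p ^^ (n * t)) (f x)"
proof (induction t)
  case (Suc t)
  have "f ((add1 p ^^ (n * Suc t)) x) = f ((add1 p ^^ n) ((add1 p ^^ (n * t)) x))"
    by (simp add: funpow_add)
  also have "\<dots> = (add1 p ^^ n) ((add1 p ^^ (n * t)) (f x))"
    using comm[OF add1_funpow_closed[OF x]] Suc by simp
  finally show ?case by (simp add: funpow_add)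
qed simp

lemma funpow_add1_reaches:
  assumes x: "x \<in> X" and y: "y \<in> X" and xy: "x K = y K" and "K \<le> N"
    and g: "gcd n (p N) dvd p K"
  shows "\<exists>t. (add1 p ^^ (n * t)) x N = y N"
proof -
  obtain s where s: "[n * s = gcd n (p N)] (mod p N)" using cong_solve_nat by blast
  let ?d = "y N + p N - x N"
  have le: "x N \<le> y N + p N" using odometer_lt[OF x, of N] by simp
  have "(y N + p N) mod p K = y N mod p K"
    using p_dvd_p[OF \<open>K \<le> N\<close>] by (simp add: mod_add_right_eq[symmetric])
  also have "\<dots> = x N mod p K"
    using odometer_mod[OF y \<open>K \<le> N\<close>] odometer_mod[OF x \<open>K \<le> N\<close>] xy by simp
  finally have "(y N + p N) mod p K = x N mod p K" .
  then have "p K dvd ?d" using mod_eq_dvd_iff_nat[OF le] by simp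
  then obtain c where c: "?d = gcd n (p N) * c" using g dvd_trans by blast
  have "[x N + n * (s * c) = x N + ?d] (mod p N)"
    using cong_add[OF cong_refl cong_mult[OF s cong_refl[of c]]] unfolding c by (simp add: mult.assoc)
  then have "(x N + n * (s * c)) mod p N = y N"
    using le odometer_lt[OF y, of N] unfolding cong_def by simp
  then show ?thesis using add1_funpow[OF x] by auto
qed

lemma displacement_local_if_commute:
  assumes f: "continuous_map (odo_top p) (odo_top p) f"
    and comm: "\<And>x. x \<in> X \<Longrightarrow> f ((add1 p ^^ n) x) = (add1 p ^^ n) (f x)"
    and K: "\<And>j. K \<le> j \<Longrightarrow> gcd n (p j) dvd p K"
  shows "displacement_local p K f"
  unfolding displacement_local_def
proof (intro ballI impI allI)
  fix x y j assume x: "x \<in> X" and y: "y \<in> X" and xy: "x K = y K"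
  have fX: "\<And>x. x \<in> X \<Longrightarrow> f x \<in> X" using f unfolding continuous_map_def by auto
  \<comment> \<open>f y j is constant on a cylinder around y, and that cylinder meets the T^n-orbit of x.\<close>
  obtain N0 where N0: "\<forall>z\<in>X. z N0 = y N0 \<longrightarrow> f z j = f y j"
    using continuous_map_odo_top_locally_constant[OF f y] by blast
  let ?N = "N0 + j + K"
  have "K \<le> ?N" by simp
  then obtain t where t: "(add1 p ^^ (n * t)) x ?N = y ?N"
    using funpow_add1_reaches[OF x y xy _ K] by blast
  let ?z = "(add1 p ^^ (n * t)) x"
  have z: "?z \<in> X" by (rule add1_funpow_closed[OF x])
  have "f y j = f ?z j" using N0 odometer_eq_below[OF z y t] z by simp
  also have "\<dots> = (f x j + n * t) mod p j"
    using funpow_add1_commute_mult[of f n x t, OF fX comm x] add1_funpow[OF fX[OF x]] by simp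
  finally have fy: "f y j = (f x j + n * t) mod p j" .
  have yj: "y j = (x j + n * t) mod p j"
    using odometer_eq_below[OF z y t, of j] add1_funpow[OF x] by simp
  show "(f y j + x j) mod p j = (f x j + y j) mod p j"
    unfolding fy yj by (simp add: mod_add_left_eq mod_add_right_eq add_ac)
qed

(* gcd n (p j) is a bounded increasing divisor chain, hence eventually constant. *)
lemma gcd_eventually_dvd:
  assumes "0 < n"
  shows "\<exists>K. \<forall>j\<ge>K. gcd n (p j) dvd p K"
proof -
  let ?S = "range (\<lambda>j. gcd n (p j))"
  have fin: "finite ?S"
    by (rule finite_subset[of _ "{..n}"]) (use assms in \<open>auto intro: gcd_le1_nat\<close>)
  obtain K where K: "gcd n (p K) = Max ?S" using Max_in[OF fin] by auto
  have "gcd n (p j) = gcd n (p K)" if "K \<le> j" for j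
  proof (rule antisym)
    show "gcd n (p j) \<le> gcd n (p K)" unfolding K using fin by (intro Max_ge) auto
    show "gcd n (p K) \<le> gcd n (p j)"
      using assms gcd_mono[OF dvd_refl p_dvd_p[OF that]] by (intro dvd_imp_le) auto
  qed
  then show ?thesis by (metis gcd_dvd2)
qed

lemma displacement_local_eq_join:
  assumes f: "displacement_local p K f" and fX: "\<And>x. x \<in> X \<Longrightarrow> f x \<in> X" and x: "x \<in> X"
  defines "w \<equiv> f (base K (x K))"
  shows "f x = odo_join p K (w K) (odo_add (quot_scale p K) (odo_high p K x) (odo_high p K w))"
proof
  fix j
  have r: "x K < p K" by (rule odometer_lt[OF x])
  have w: "w \<in> X" unfolding w_def using fX base_split(1)[OF r] .
  have "(f x j + x K) mod p j = (f x j + base K (x K) j) mod p j"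
    unfolding odo_join_def by (simp add: mod_simps)
  also have "\<dots> = (w j + x j) mod p j"
    using f x base_split(1,2)[OF r] unfolding displacement_local_def w_def by metis
  also have "\<dots> = ((w K + p K * odo_high p K w j) + (x K + p K * odo_high p K x j)) mod p j"
    using odometer_coord[OF w, of j K] odometer_coord[OF x, of j K] by (simp add: mod_add_eq)
  also have "\<dots> = ((w K + p K * (odo_high p K x j + odo_high p K w j)) + x K) mod p j"
    by (simp add: algebra_simps)
  finally have "[f x j = w K + p K * (odo_high p K x j + odo_high p K w j)] (mod p j)"
    unfolding cong_def[symmetric] by (simp add: cong_add_rcancel_nat)
  then show "f x j = odo_join p K (w K) (odo_add (quot_scale p K) (odo_high p K x) (odo_high p K w)) j"
    unfolding odo_join_add cong_def using odometer_lt[OF fX[OF x], of j] by simp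
qed

lemma base_image_permutes:
  assumes g: "displacement_local p K g" and fX: "\<And>x. x \<in> X \<Longrightarrow> f x \<in> X"
    and gf: "\<And>x. x \<in> X \<Longrightarrow> g (f x) = x"
  shows "(\<lambda>r. if r < p K then f (base K r) K else r) permutes {0..<p K}" (is "?\<sigma> permutes _")
proof (rule bij_imp_permutes)
  have inj: "inj_on ?\<sigma> {0..<p K}"
  proof (rule inj_onI)
    fix r r' assume r: "r \<in> {0..<p K}" and r': "r' \<in> {0..<p K}" and e: "?\<sigma> r = ?\<sigma> r'"
    then have same: "f (base K r) K = f (base K r') K" by simp
    have "(g (f (base K r')) K + f (base K r) K) mod p K = (g (f (base K r)) K + f (base K r') K) mod p K"
      using g fX base_split(1) r r' same unfolding displacement_local_def by simp
    then have "[r' = r] (mod p K)"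
      using gf base_split(1,2) r r' same unfolding cong_def[symmetric]
      by (simp add: cong_add_rcancel_nat)
    then show "r = r'" using r r' cong_less_modulus_unique_nat by fastforce
  qed
  moreover have "?\<sigma> ` {0..<p K} \<subseteq> {0..<p K}"
    using odometer_lt[OF fX[OF base_split(1)]] by auto
  ultimately show "bij_betw ?\<sigma> {0..<p K} {0..<p K}"
    unfolding bij_betw_def using endo_inj_surj by blast
qed simp

lemma commute_funpow_inverse:
  assumes commf: "\<And>x. x \<in> X \<Longrightarrow> f ((add1 p ^^ n) x) = (add1 p ^^ n) (f x)"
    and gX: "\<And>x. x \<in> X \<Longrightarrow> g x \<in> X"
    and fg: "\<And>x. x \<in> X \<Longrightarrow> f (g x) = x" and gf: "\<And>x. x \<in> X \<Longrightarrow> g (f x) = x"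
    and y: "y \<in> X"
  shows "g ((add1 p ^^ n) y) = (add1 p ^^ n) (g y)"
proof -
  have "g ((add1 p ^^ n) y) = g (f ((add1 p ^^ n) (g y)))" using fg[OF y] commf[OF gX[OF y]] by simp
  then show ?thesis using gf[OF add1_funpow_closed[OF gX[OF y]]] by simp
qed

lemma aut_pow_in_sdp_act_image:
  assumes f: "f \<in> aut_pow p n" and K: "\<And>j. K \<le> j \<Longrightarrow> gcd n (p j) dvd p K"
  shows "f \<in> sdp_act p K ` carrier (G K)"
proof -
  have fe: "f \<in> extensional X"
    and commf: "\<And>x. x \<in> X \<Longrightarrow> f ((add1 p ^^ n) x) = (add1 p ^^ n) (f x)"
    and "homeomorphic_map (odo_top p) (odo_top p) f"
    using f unfolding aut_pow_def by auto
  then obtain g where "homeomorphic_maps (odo_top p) (odo_top p) f g"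
    using homeomorphic_map_maps by blast
  then have fc: "continuous_map (odo_top p) (odo_top p) f"
    and gc: "continuous_map (odo_top p) (odo_top p) g"
    and gf: "\<And>x. x \<in> X \<Longrightarrow> g (f x) = x" and fg: "\<And>x. x \<in> X \<Longrightarrow> f (g x) = x"
    unfolding homeomorphic_maps_def by auto
  have fX: "\<And>x. x \<in> X \<Longrightarrow> f x \<in> X" and gX: "\<And>x. x \<in> X \<Longrightarrow> g x \<in> X"
    using fc gc unfolding continuous_map_def by auto
  have commg: "g ((add1 p ^^ n) y) = (add1 p ^^ n) (g y)" if y: "y \<in> X" for y
    using commute_funpow_inverse[OF commf gX fg gf y] .
  define \<sigma> where "\<sigma> = (\<lambda>r. if r < p K then f (base K r) K else r)"
  have \<sigma>: "\<sigma> permutes {0..<p K}"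
    unfolding \<sigma>_def by (rule base_image_permutes[OF displacement_local_if_commute[OF gc commg K] fX gf])
  define v where "v = (\<lambda>i\<in>{0..<p K}. odo_high p K (f (base K (inv_into UNIV \<sigma> i))))"
  have "odo_high p K (f (base K (inv_into UNIV \<sigma> i))) \<in> odometer (quot_scale p K)" if "i < p K" for i
    by (intro odo_high_closed fX base_split(1) permutes_lt[OF permutes_inv[OF \<sigma>] that])
  then have a: "(v, \<sigma>) \<in> carrier (G K)"
    unfolding carrier_odo_sdp v_def using \<sigma> by auto
  have "f x = sdp_act p K (v, \<sigma>) x" for x
  proof (cases "x \<in> X")
    case x: True
    have "v (\<sigma> (x K)) = odo_high p K (f (base K (x K)))"
      unfolding v_def using permutes_lt[OF \<sigma> odometer_lt[OF x]] permutes_inverses(2)[OF \<sigma>] by simp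
    then show ?thesis
      using displacement_local_eq_join[OF displacement_local_if_commute[OF fc commf K] fX x]
        odometer_lt[OF x] x unfolding sdp_act_def \<sigma>_def by simp
  qed (use fe in \<open>simp add: sdp_act_def extensional_def\<close>)
  then show ?thesis using a by blast
qed

end

section \<open>The quotient scales give factors\<close>

(* Nested infinite sets of indices on which a m mod p i is fixed for all i < j; the fixed residues
   form a point of the odometer, a cluster point of the sequence a. *)
fun cluster_set :: "(nat \<Rightarrow> nat) \<Rightarrow> (nat \<Rightarrow> nat) \<Rightarrow> nat \<Rightarrow> nat set" where
  "cluster_set p a 0 = UNIV"
| "cluster_set p a (Suc j) = {m \<in> cluster_set p a j.
     a m mod p j = (SOME r. r < p j \<and> infinite {m \<in> cluster_set p a j. a m mod p j = r})}"

definition cluster_point :: "(nat \<Rightarrow> nat) \<Rightarrow> (nat \<Rightarrow> nat) \<Rightarrow> nat \<Rightarrow> nat" where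
  "cluster_point p a j = (SOME r. r < p j \<and> infinite {m \<in> cluster_set p a j. a m mod p j = r})"

lemma cluster_set_Suc: "cluster_set p a (Suc j) = {m \<in> cluster_set p a j. a m mod p j = cluster_point p a j}"
  by (simp add: cluster_point_def)

declare cluster_set.simps(2) [simp del]

definition odo_factor_map :: "(nat \<Rightarrow> nat) \<Rightarrow> nat \<Rightarrow> (nat \<Rightarrow> nat) \<Rightarrow> (nat \<Rightarrow> nat)" where
  "odo_factor_map p K x = (\<lambda>n. x (n + K) mod quot_scale p K n)"

context odometer_chain
begin

lemma cluster_point_step:
  assumes "infinite (cluster_set p a j)"
  shows "cluster_point p a j < p j" "infinite (cluster_set p a (Suc j))"
proof -
  have "\<exists>r\<in>{..<p j}. infinite {m \<in> cluster_set p a j. a m mod p j = r}"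
    by (rule pigeonhole_infinite_rel) (use assms pos in auto)
  then have "\<exists>r. r < p j \<and> infinite {m \<in> cluster_set p a j. a m mod p j = r}" by auto
  then have "cluster_point p a j < p j \<and> infinite {m \<in> cluster_set p a j. a m mod p j = cluster_point p a j}"
    unfolding cluster_point_def by (rule someI_ex)
  then show "cluster_point p a j < p j" "infinite (cluster_set p a (Suc j))"
    unfolding cluster_set_Suc by auto
qed

lemma cluster_set_infinite: "infinite (cluster_set p a j)"
  by (induction j) (auto dest: cluster_point_step(2))

lemma cluster_point_in_odometer: "cluster_point p a \<in> X"
  unfolding odometer_def
proof (intro CollectI conjI allI)
  fix j
  show "cluster_point p a j < p j" by (rule cluster_point_step(1)[OF cluster_set_infinite])
  obtain m where "m \<in> cluster_set p a (Suc (Suc j))"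
    using cluster_set_infinite[of a "Suc (Suc j)"] by (metis finite.emptyI ex_in_conv)
  then have "a m mod p (Suc j) = cluster_point p a (Suc j)" "a m mod p j = cluster_point p a j"
    unfolding cluster_set_Suc by auto
  then show "cluster_point p a (Suc j) mod p j = cluster_point p a j"
    using mod_p_mod[of j "Suc j" "a m"] by simp
qed

lemma odo_factor_map_closed:
  assumes x: "x \<in> X"
  shows "odo_factor_map p K x \<in> odometer (quot_scale p K)"
  unfolding odometer_def odo_factor_map_def
proof (intro CollectI conjI allI)
  interpret Q: odometer_chain "quot_scale p K" by (rule odometer_chain_quot_scale)
  fix n
  show "x (n + K) mod quot_scale p K n < quot_scale p K n" using Q.pos by simp
  have "quot_scale p K n dvd p (n + K)" using p_mult_quot_scale[of K n] by (metis dvd_triv_right)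
  then have "x (Suc n + K) mod quot_scale p K (Suc n) mod quot_scale p K n
      = x (Suc n + K) mod p (n + K) mod quot_scale p K n"
    using Q.dvd_Suc by (simp add: mod_mod_cancel)
  also have "\<dots> = x (n + K) mod quot_scale p K n" using odometer_mod[OF x, of "n + K" "Suc n + K"] by simp
  finally show "x (Suc n + K) mod quot_scale p K (Suc n) mod quot_scale p K n = x (n + K) mod quot_scale p K n" .
qed

lemma odo_factor_map_surj:
  assumes y: "y \<in> odometer (quot_scale p K)"
  shows "odo_factor_map p K (cluster_point p y) = y"
proof
  interpret Q: odometer_chain "quot_scale p K" by (rule odometer_chain_quot_scale)
  fix n
  obtain m where m: "n \<le> m" "m \<in> cluster_set p y (Suc (n + K))"
    using cluster_set_infinite[of y "Suc (n + K)"] unfolding infinite_nat_iff_unbounded_le by blast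
  then have "cluster_point p y (n + K) = y m mod p (n + K)" unfolding cluster_set_Suc by auto
  moreover have "quot_scale p K n dvd p (n + K)" using p_mult_quot_scale[of K n] by (metis dvd_triv_right)
  ultimately have "odo_factor_map p K (cluster_point p y) n = y m mod quot_scale p K n"
    unfolding odo_factor_map_def by (simp add: mod_mod_cancel)
  then show "odo_factor_map p K (cluster_point p y) n = y n" using Q.odometer_mod[OF y m(1)] by simp
qed

lemma scale_quot_scale:
  assumes "scale p"
  shows "scale (quot_scale p K)"
  unfolding scale_def
proof (intro conjI notI)
  show "\<forall>n. 0 < quot_scale p K n \<and> quot_scale p K n dvd quot_scale p K (Suc n)"
    using odometer_chain_quot_scale unfolding odometer_chain_def by blast
  assume "\<exists>N. \<forall>n\<ge>N. quot_scale p K n = quot_scale p K N"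
  then obtain N where N: "\<And>n. N \<le> n \<Longrightarrow> quot_scale p K n = quot_scale p K N" by blast
  have "p n = p (N + K)" if "N + K \<le> n" for n
  proof -
    have "p n = p K * quot_scale p K (n - K)" using p_mult_quot_scale[of K "n - K"] that by simp
    also have "\<dots> = p K * quot_scale p K N" using N[of "n - K"] that by simp
    finally show ?thesis using p_mult_quot_scale[of K N] by simp
  qed
  then show False using assms unfolding scale_def by blast
qed

lemma odo_factor_quot_scale:
  assumes "scale p"
  shows "odo_factor (quot_scale p K) p"
  unfolding odo_factor_def
proof (intro conjI exI[of _ "odo_factor_map p K"])
  show "scale (quot_scale p K)" using scale_quot_scale[OF assms] .
  show "continuous_map (odo_top p) (odo_top (quot_scale p K)) (odo_factor_map p K)"
  proof (rule continuous_map_odo_topI[OF odo_factor_map_closed])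
    show "\<exists>N. \<forall>x\<in>X. \<forall>y\<in>X. x N = y N \<longrightarrow> odo_factor_map p K x j = odo_factor_map p K y j" for j
      by (rule exI[of _ "j + K"]) (simp add: odo_factor_map_def)
  qed
  show "odo_factor_map p K ` X = odometer (quot_scale p K)"
  proof
    show "odo_factor_map p K ` X \<subseteq> odometer (quot_scale p K)" using odo_factor_map_closed by blast
    show "odometer (quot_scale p K) \<subseteq> odo_factor_map p K ` X"
      using odo_factor_map_surj cluster_point_in_odometer by (metis image_eqI subsetI)
  qed
  show "\<forall>x\<in>X. odo_factor_map p K (add1 p x) = add1 (quot_scale p K) (odo_factor_map p K x)"
  proof (intro ballI ext)
    fix x n
    have "quot_scale p K n dvd p (n + K)" using p_mult_quot_scale[of K n] by (metis dvd_triv_right)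
    then have "odo_factor_map p K (add1 p x) n = (x (n + K) + 1) mod quot_scale p K n"
      unfolding odo_factor_map_def add1_def odo_add_def odo_one_def
      by (simp only: mod_add_right_eq mod_mod_cancel)
    then show "odo_factor_map p K (add1 p x) n = add1 (quot_scale p K) (odo_factor_map p K x) n"
      unfolding odo_factor_map_def add1_def odo_add_def odo_one_def by (simp add: mod_simps)
  qed
qed

end

section \<open>The direct limit\<close>

definition connecting_map ::
    "(nat \<Rightarrow> nat) \<Rightarrow> nat \<Rightarrow> (nat \<Rightarrow> nat \<Rightarrow> nat) \<times> (nat \<Rightarrow> nat) \<Rightarrow> (nat \<Rightarrow> nat \<Rightarrow> nat) \<times> (nat \<Rightarrow> nat)" where
  "connecting_map p K a =
     inv_into (carrier (odo_sdp (quot_scale p (Suc K)) (p (Suc K)))) (sdp_act p (Suc K)) (sdp_act p K a)"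

definition limit_class ::
    "(nat \<Rightarrow> nat) \<Rightarrow> ((nat \<Rightarrow> nat) \<Rightarrow> (nat \<Rightarrow> nat)) \<Rightarrow> (nat \<times> (nat \<Rightarrow> nat \<Rightarrow> nat) \<times> (nat \<Rightarrow> nat)) set" where
  "limit_class p f = {(j, h). h \<in> carrier (odo_sdp (quot_scale p j) (p j)) \<and> sdp_act p j h = f}"

context odometer_chain
begin

lemma sdp_act_image_Suc:
  assumes a: "a \<in> carrier (G K)"
  shows "sdp_act p K a \<in> sdp_act p (Suc K) ` carrier (G (Suc K))"
proof (rule aut_pow_in_sdp_act_image[OF sdp_act_in_aut_pow[OF a]])
  show "gcd (p K) (p j) dvd p (Suc K)" for j
    using dvd_trans[OF gcd_dvd1 dvd_Suc] .
qed

lemma connecting_map_closed: "a \<in> carrier (G K) \<Longrightarrow> connecting_map p K a \<in> carrier (G (Suc K))"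
  unfolding connecting_map_def by (rule inv_into_into[OF sdp_act_image_Suc])

lemma sdp_act_connecting_map:
  "a \<in> carrier (G K) \<Longrightarrow> sdp_act p (Suc K) (connecting_map p K a) = sdp_act p K a"
  unfolding connecting_map_def by (rule f_inv_into_f[OF sdp_act_image_Suc])

lemma connecting_map_hom: "connecting_map p K \<in> hom (G K) (G (Suc K))"
proof (rule homI)
  interpret Q: odometer_chain "quot_scale p K" by (rule odometer_chain_quot_scale)
  interpret Q': odometer_chain "quot_scale p (Suc K)" by (rule odometer_chain_quot_scale)
  show "a \<in> carrier (G K) \<Longrightarrow> connecting_map p K a \<in> carrier (G (Suc K))" for a
    by (rule connecting_map_closed)
  fix a b assume a: "a \<in> carrier (G K)" and b: "b \<in> carrier (G K)"
  have ab: "a \<otimes>\<^bsub>G K\<^esub> b \<in> carrier (G K)" by (rule Q.odo_sdp_mult_closed[OF a b])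
  have ab': "connecting_map p K a \<otimes>\<^bsub>G (Suc K)\<^esub> connecting_map p K b \<in> carrier (G (Suc K))"
    by (rule Q'.odo_sdp_mult_closed[OF connecting_map_closed[OF a] connecting_map_closed[OF b]])
  have "sdp_act p (Suc K) (connecting_map p K (a \<otimes>\<^bsub>G K\<^esub> b))
      = sdp_act p (Suc K) (connecting_map p K a \<otimes>\<^bsub>G (Suc K)\<^esub> connecting_map p K b)"
    unfolding sdp_act_connecting_map[OF ab] sdp_act_mult[OF a b]
      sdp_act_mult[OF connecting_map_closed[OF a] connecting_map_closed[OF b]]
      sdp_act_connecting_map[OF a] sdp_act_connecting_map[OF b] ..
  then show "connecting_map p K (a \<otimes>\<^bsub>G K\<^esub> b) = connecting_map p K a \<otimes>\<^bsub>G (Suc K)\<^esub> connecting_map p K b"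
    using inj_on_sdp_act[of "Suc K"] connecting_map_closed[OF ab] ab' by (meson inj_onD)
qed

lemma inj_on_connecting_map: "inj_on (connecting_map p K) (carrier (G K))"
proof (rule inj_onI)
  fix a b assume a: "a \<in> carrier (G K)" and b: "b \<in> carrier (G K)"
    and "connecting_map p K a = connecting_map p K b"
  then have "sdp_act p K a = sdp_act p K b" using sdp_act_connecting_map[OF a] sdp_act_connecting_map[OF b] by metis
  then show "a = b" using inj_on_sdp_act[of K] a b by (meson inj_onD)
qed

lemma dl_lift_connecting_map:
  assumes g: "g \<in> carrier (G i)" and "i \<le> k"
  shows "dl_lift (connecting_map p) i (k - i) g \<in> carrier (G k)"
    "sdp_act p k (dl_lift (connecting_map p) i (k - i) g) = sdp_act p i g"
proof -
  have "dl_lift (connecting_map p) i d g \<in> carrier (G (i + d))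
      \<and> sdp_act p (i + d) (dl_lift (connecting_map p) i d g) = sdp_act p i g" for d
    by (induction d) (use g connecting_map_closed sdp_act_connecting_map in auto)
  from this[of "k - i"] show "dl_lift (connecting_map p) i (k - i) g \<in> carrier (G k)"
    "sdp_act p k (dl_lift (connecting_map p) i (k - i) g) = sdp_act p i g"
    using \<open>i \<le> k\<close> by auto
qed

lemma dl_rel_iff:
  "((i, g), (j, h)) \<in> dl_rel G (connecting_map p) \<longleftrightarrow>
     g \<in> carrier (G i) \<and> h \<in> carrier (G j) \<and> sdp_act p i g = sdp_act p j h"
proof
  assume "((i, g), (j, h)) \<in> dl_rel G (connecting_map p)"
  then obtain k where g: "g \<in> carrier (G i)" and h: "h \<in> carrier (G j)" and k: "i \<le> k" "j \<le> k"
    and e: "dl_lift (connecting_map p) i (k - i) g = dl_lift (connecting_map p) j (k - j) h"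
    unfolding dl_rel_def by blast
  have "sdp_act p i g = sdp_act p j h"
    using dl_lift_connecting_map(2)[OF g k(1)] dl_lift_connecting_map(2)[OF h k(2)] e by simp
  then show "g \<in> carrier (G i) \<and> h \<in> carrier (G j) \<and> sdp_act p i g = sdp_act p j h"
    using g h by simp
next
  assume A: "g \<in> carrier (G i) \<and> h \<in> carrier (G j) \<and> sdp_act p i g = sdp_act p j h"
  let ?k = "max i j"
  have k: "i \<le> ?k" "j \<le> ?k" by auto
  have "sdp_act p ?k (dl_lift (connecting_map p) i (?k - i) g)
      = sdp_act p ?k (dl_lift (connecting_map p) j (?k - j) h)"
    using dl_lift_connecting_map(2)[OF _ k(1), of g] dl_lift_connecting_map(2)[OF _ k(2), of h] A
    by simp
  then have "dl_lift (connecting_map p) i (?k - i) g = dl_lift (connecting_map p) j (?k - j) h"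
    using inj_on_sdp_act[of ?k] dl_lift_connecting_map(1)[OF _ k(1), of g]
      dl_lift_connecting_map(1)[OF _ k(2), of h] A
    by (meson inj_onD)
  then show "((i, g), (j, h)) \<in> dl_rel G (connecting_map p)"
    unfolding dl_rel_def using A k by blast
qed

lemma dl_rel_class:
  assumes g: "g \<in> carrier (G i)"
  shows "dl_rel G (connecting_map p) `` {(i, g)} = limit_class p (sdp_act p i g)"
proof -
  have "(j, h) \<in> dl_rel G (connecting_map p) `` {(i, g)} \<longleftrightarrow> (j, h) \<in> limit_class p (sdp_act p i g)"
    for j h
    unfolding limit_class_def using dl_rel_iff[of i g j h] g by auto
  then show ?thesis by auto
qed

lemma carrier_stab_aut: "carrier (stab_aut p) = (\<Union>K. sdp_act p K ` carrier (G K))"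
proof
  show "carrier (stab_aut p) \<subseteq> (\<Union>K. sdp_act p K ` carrier (G K))"
  proof
    fix f assume "f \<in> carrier (stab_aut p)"
    then obtain n where n: "1 \<le> n" "f \<in> aut_pow p n" unfolding stab_aut_def by auto
    obtain K where "\<forall>j\<ge>K. gcd n (p j) dvd p K" using gcd_eventually_dvd[of n] n(1) by auto
    then have "f \<in> sdp_act p K ` carrier (G K)" by (intro aut_pow_in_sdp_act_image[OF n(2)]) blast
    then show "f \<in> (\<Union>K. sdp_act p K ` carrier (G K))" by blast
  qed
  show "(\<Union>K. sdp_act p K ` carrier (G K)) \<subseteq> carrier (stab_aut p)"
  proof
    fix f assume "f \<in> (\<Union>K. sdp_act p K ` carrier (G K))"
    then obtain K a where a: "a \<in> carrier (G K)" "f = sdp_act p K a" by blast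
    have "p K \<in> {1..}" using pos[of K] by simp
    then show "f \<in> carrier (stab_aut p)"
      using sdp_act_in_aut_pow[OF a(1)] a(2) unfolding stab_aut_def by auto
  qed
qed

lemma limit_class_nonempty:
  assumes "f \<in> carrier (stab_aut p)"
  shows "\<exists>a. a \<in> limit_class p f"
  using assms carrier_stab_aut unfolding limit_class_def by auto

lemma limit_class_in_carrier:
  assumes "f \<in> carrier (stab_aut p)"
  shows "limit_class p f \<in> carrier (direct_limit G (connecting_map p))"
proof -
  obtain K a where a: "a \<in> carrier (G K)" "f = sdp_act p K a"
    using assms carrier_stab_aut by blast
  have "dl_rel G (connecting_map p) `` {(K, a)} \<in> (SIGMA j:UNIV. carrier (G j)) // dl_rel G (connecting_map p)"
    by (rule quotientI) (use a in simp)
  then show ?thesis using dl_rel_class[OF a(1)] a(2) unfolding direct_limit_def by simp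
qed

lemma limit_class_mult:
  assumes f1: "f1 \<in> carrier (stab_aut p)" and f2: "f2 \<in> carrier (stab_aut p)"
  shows "limit_class p (f1 \<otimes>\<^bsub>stab_aut p\<^esub> f2)
    = limit_class p f1 \<otimes>\<^bsub>direct_limit G (connecting_map p)\<^esub> limit_class p f2"
proof -
  obtain i g where ig: "(SOME a. a \<in> limit_class p f1) = (i, g)" by (cases "SOME a. a \<in> limit_class p f1")
  obtain j h where jh: "(SOME a. a \<in> limit_class p f2) = (j, h)" by (cases "SOME a. a \<in> limit_class p f2")
  have "(i, g) \<in> limit_class p f1" unfolding ig[symmetric] using limit_class_nonempty[OF f1] by (rule someI_ex)
  then have g: "g \<in> carrier (G i)" "sdp_act p i g = f1" unfolding limit_class_def by auto
  have "(j, h) \<in> limit_class p f2" unfolding jh[symmetric] using limit_class_nonempty[OF f2] by (rule someI_ex)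
  then have h: "h \<in> carrier (G j)" "sdp_act p j h = f2" unfolding limit_class_def by auto
  define k where "k = max i j"
  let ?g = "dl_lift (connecting_map p) i (k - i) g" and ?h = "dl_lift (connecting_map p) j (k - j) h"
  have g': "?g \<in> carrier (G k)" "sdp_act p k ?g = f1"
    using dl_lift_connecting_map[OF g(1), of k] g(2) unfolding k_def by auto
  have h': "?h \<in> carrier (G k)" "sdp_act p k ?h = f2"
    using dl_lift_connecting_map[OF h(1), of k] h(2) unfolding k_def by auto
  interpret Q: odometer_chain "quot_scale p k" by (rule odometer_chain_quot_scale)
  have "limit_class p f1 \<otimes>\<^bsub>direct_limit G (connecting_map p)\<^esub> limit_class p f2
      = dl_rel G (connecting_map p) `` {(k, ?g \<otimes>\<^bsub>G k\<^esub> ?h)}"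
    unfolding direct_limit_def dl_mult_def by (simp add: ig jh k_def Let_def)
  also have "\<dots> = limit_class p (sdp_act p k (?g \<otimes>\<^bsub>G k\<^esub> ?h))"
    by (rule dl_rel_class[OF Q.odo_sdp_mult_closed[OF g'(1) h'(1)]])
  also have "sdp_act p k (?g \<otimes>\<^bsub>G k\<^esub> ?h) = f1 \<otimes>\<^bsub>stab_aut p\<^esub> f2"
    using sdp_act_mult[OF g'(1) h'(1)] g'(2) h'(2) unfolding stab_aut_def by simp
  finally show ?thesis ..
qed

lemma limit_class_iso: "limit_class p \<in> iso (stab_aut p) (direct_limit G (connecting_map p))"
proof -
  let ?DL = "direct_limit G (connecting_map p)"
  have "inj_on (limit_class p) (carrier (stab_aut p))"
  proof (rule inj_onI)
    fix f1 f2 assume f1: "f1 \<in> carrier (stab_aut p)" and "limit_class p f1 = limit_class p f2"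
    then show "f1 = f2" using limit_class_nonempty[OF f1] unfolding limit_class_def by auto
  qed
  moreover have "carrier ?DL \<subseteq> limit_class p ` carrier (stab_aut p)"
  proof
    fix A assume "A \<in> carrier ?DL"
    then obtain i g where g: "g \<in> carrier (G i)" and A: "A = dl_rel G (connecting_map p) `` {(i, g)}"
      unfolding direct_limit_def by (auto elim!: quotientE)
    have "A = limit_class p (sdp_act p i g)" using A dl_rel_class[OF g] by simp
    moreover have "sdp_act p i g \<in> carrier (stab_aut p)" using carrier_stab_aut g by blast
    ultimately show "A \<in> limit_class p ` carrier (stab_aut p)" by blast
  qed
  ultimately show ?thesis
    unfolding iso_def hom_def bij_betw_def
    using limit_class_in_carrier limit_class_mult by blast
qed

end

theorem theorem1p1:
  fixes p :: "nat \<Rightarrow> nat"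
  assumes "scale p"
  shows "\<exists>(G :: nat \<Rightarrow> ((nat \<Rightarrow> nat \<Rightarrow> nat) \<times> (nat \<Rightarrow> nat)) monoid) \<phi>.
           (\<forall>j. \<exists>q k. odo_factor q p \<and> G j = odo_sdp q (p k))
         \<and> (\<forall>j. \<phi> j \<in> hom (G j) (G (Suc j)) \<and> inj_on (\<phi> j) (carrier (G j)))
         \<and> stab_aut p \<cong> direct_limit G \<phi>"
proof -
  interpret odometer_chain p by (rule odometer_chain_if_scale[OF assms])
  show ?thesis
  proof (intro exI[of _ G] exI[of _ "connecting_map p"] conjI allI)
    show "\<exists>q k. odo_factor q p \<and> G j = odo_sdp q (p k)" for j
      using odo_factor_quot_scale[OF assms] by blast
    show "connecting_map p j \<in> hom (G j) (G (Suc j))" for j by (rule connecting_map_hom)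
    show "inj_on (connecting_map p j) (carrier (G j))" for j by (rule inj_on_connecting_map)
    show "stab_aut p \<cong> direct_limit G (connecting_map p)"
      unfolding is_iso_def using limit_class_iso by blast
  qed
qed

end
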